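(* Let $\bm{\mu}\in X^{\mathcal{L}(\mathcal{T})}$ with $V_{s_0}(\bm{\mu})\neq\theta$. For every leaf $\ell\in\mathcal{L}(\mathcal{T})$ with $w^{s_0}_\ell(\bm{\mu})>0$, we have $\mu_\ell>\theta$ if $a_{s_0}(\bm{\mu})=$'win' and $\mu_\ell<\theta$ if $a_{s_0}(\bm{\mu})=$'lose'.
   Context: $\mathcal{T}$ is a finite rooted tree with node set $S$, root $s_0$, children $\mathcal{C}(s)$, leaves $\mathcal{L}(\mathcal{T})$, and $\mathcal{D}(s)$ the leaves descending from $s$; internal labels $L(s)\in\{\text{MAX},\text{MIN}\}$. $X\subseteq\mathbb{R}$ mean-parameter set of a one-parameter exponential family; $d(x,y)$ KL divergence between members with means $x,y$ (so $d(x,y)\ge0$ with equality iff $x=y$); threshold $\theta\in X$. $V_s(\bm{\mu})=\mu_s$ at leaves, max/min of children's values at MAX/MIN nodes; $a_s(\bm{\mu})=$'win' iff $V_s(\bm{\mu})\ge\theta$. Recursive weights: $a^*=a_{s_0}(\bm{\mu})$; $P=$MAX, $Q=$MIN if $a^*=$'win', swapped if 'lose'. Leaf $s$: $w^s_s=1$, $d_s=d(\mu_s,\theta)$ if ($a^*=$'win', $\mu_s\ge\theta$) or ($a^*=$'lose', $\mu_s<\theta$), else $0$. $L(s)=P$: $d_s=\max_c d_c$, fixed $c^*(s)\in\arg\max_c d_c$, and if $d_s>0$: $w^s_\ell=w^{c^*(s)}_\ell$ for $\ell\in\mathcal{D}(c^*(s))$, $0$ for other $\ell\in\mathcal{D}(s)$.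 $L(s)=Q$ and all $d_c>0$: $d_s=(\sum_c1/d_c)^{-1}$, $w^s_\ell=\frac{w^c_\ell/d_c}{\sum_{c'}1/d_{c'}}$ for $\ell\in\mathcal{D}(c)$. $L(s)=Q$ otherwise: $d_s=0$. Internal $s$ with $d_s=0$: $\bm{w}^s$ a fixed arbitrary probability vector on $\mathcal{D}(s)$. *)

theory Defs
  imports Complex_Main
begin

text \<open>A node of the tree
  is identified with the subtree rooted at it.\<close>

datatype player = MaxNode | MinNode

datatype 'a gtree = Leaf 'a | Node player "'a gtree list"

fun leaves :: "'a gtree \<Rightarrow> 'a list" where
  "leaves (Leaf a) = [a]"
| "leaves (Node L cs) = concat (map leaves cs)"

fun subtrees :: "'a gtree \<Rightarrow> 'a gtree set" where
  "subtrees (Leaf a) = {Leaf a}"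
| "subtrees (Node L cs) = insert (Node L cs) (\<Union>c\<in>set cs. subtrees c)"

definition wf_gtree :: "'a gtree \<Rightarrow> bool" where
  "wf_gtree t \<longleftrightarrow> distinct (leaves t) \<and> (\<forall>L cs. Node L cs \<in> subtrees t \<longrightarrow> cs \<noteq> [])"

fun V :: "('a \<Rightarrow> real) \<Rightarrow> 'a gtree \<Rightarrow> real" where
  "V \<mu> (Leaf a) = \<mu> a"
| "V \<mu> (Node MaxNode cs) = Max (set (map (V \<mu>) cs))"
| "V \<mu> (Node MinNode cs) = Min (set (map (V \<mu>) cs))"

text \<open>P = MAX (MaxNode) if the root answer is 'win', P = MinNode if it is 'lose'.\<close>
definition is_P :: "bool \<Rightarrow> player \<Rightarrow> bool" where
  "is_P win L \<longleftrightarrow> (if win then L = MaxNode else L = MinNode)"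

text \<open>The recursive quantity d_s ; win encodes a* = 'win'.\<close>
fun dv :: "(real \<Rightarrow> real \<Rightarrow> real) \<Rightarrow> real \<Rightarrow> ('a \<Rightarrow> real) \<Rightarrow> bool \<Rightarrow> 'a gtree \<Rightarrow> real" where
  "dv d \<theta> \<mu> win (Leaf a) =
     (if (win \<and> \<theta> \<le> \<mu> a) \<or> (\<not> win \<and> \<mu> a < \<theta>) then d (\<mu> a) \<theta> else 0)"
| "dv d \<theta> \<mu> win (Node L cs) =
     (if is_P win L then Max (set (map (dv d \<theta> \<mu> win) cs))
      else if (\<forall>c\<in>set cs. 0 < dv d \<theta> \<mu> win c)
           then 1 / (\<Sum>c\<leftarrow>cs. 1 / dv d \<theta> \<mu> win c)
           else 0)"

text \<open>Weights w^s_l (extended by 0 outside the leaves D(s)).  cst is the fixed choice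
  c*(s) and pv the fixed arbitrary probability vector used when d_s = 0.\<close>
fun w :: "(real \<Rightarrow> real \<Rightarrow> real) \<Rightarrow> real \<Rightarrow> ('a \<Rightarrow> real) \<Rightarrow> bool
          \<Rightarrow> ('a gtree \<Rightarrow> 'a gtree) \<Rightarrow> ('a gtree \<Rightarrow> 'a \<Rightarrow> real) \<Rightarrow> 'a gtree \<Rightarrow> 'a \<Rightarrow> real" where
  "w d \<theta> \<mu> win cst pv (Leaf a) l = (if l = a then 1 else 0)"
| "w d \<theta> \<mu> win cst pv (Node L cs) l =
     (if dv d \<theta> \<mu> win (Node L cs) = 0
      then (if l \<in> set (leaves (Node L cs)) then pv (Node L cs) l else 0)
      else if is_P win L
      then (\<Sum>c\<leftarrow>cs. if c = cst (Node L cs) \<and> l \<in> set (leaves c)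
                       then w d \<theta> \<mu> win cst pv c l else 0)
      else (\<Sum>c\<leftarrow>cs. if l \<in> set (leaves c)
                       then (w d \<theta> \<mu> win cst pv c l / dv d \<theta> \<mu> win c)
                            / (\<Sum>c'\<leftarrow>cs. 1 / dv d \<theta> \<mu> win c')
                       else 0))"

end

theory Submission
  imports Defs
begin

text \<open>If the root value is strictly on the winning side of \<theta>, then d is positive at the root:
  a P-node inherits the value of some child, and every child of a Q-node is at least as
  good for the winner as the node itself.  Hence the root weights are not the arbitrary
  vector pv but are obtained recursively, and they only ever pass mass to children with
  positive d: a P-node to its argmax child, a Q-node to children with d > 0 by construction.
  So a leaf l of positive weight has d(\<mu> l, \<theta>) > 0 and lies on the winning side of \<theta>, and since
  d(\<theta>, \<theta>) = 0 it lies strictly on that side.\<close>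

abbreviation strictly_on_side :: "bool \<Rightarrow> real \<Rightarrow> real \<Rightarrow> bool" where
  "strictly_on_side win \<theta> x \<equiv> (if win then \<theta> < x else x < \<theta>)"

lemma sum_list_pos_imp_ex_pos:
  fixes f :: "'a \<Rightarrow> 'b::{ordered_comm_monoid_add, linorder}"
  assumes "0 < (\<Sum>x\<leftarrow>xs. f x)"
  shows "\<exists>x\<in>set xs. 0 < f x"
proof (rule ccontr)
  assume "\<not> ?thesis"
  then have "(\<Sum>x\<leftarrow>xs. f x) \<le> 0"
    by (intro sum_list_nonpos) (auto simp: not_less)
  with assms show False by simp
qed

lemma sum_list_pos:
  fixes f :: "'a \<Rightarrow> 'b::{ordered_comm_monoid_add, strict_ordered_ab_semigroup_add}"
  assumes "xs \<noteq> []" and "\<And>x. x \<in> set xs \<Longrightarrow> 0 < f x"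
  shows "0 < (\<Sum>x\<leftarrow>xs. f x)"
  using sum_list_strict_mono[of xs "\<lambda>_. 0" f] assms by simp

lemma subtrees_child_subset:
  "c \<in> set cs \<Longrightarrow> subtrees c \<subseteq> subtrees (Node L cs)"
  by auto

lemma leaves_child_subset:
  "c \<in> set cs \<Longrightarrow> set (leaves c) \<subseteq> set (leaves (Node L cs))"
  by auto

lemma V_Node_attained:
  assumes "cs \<noteq> []"
  shows "\<exists>c\<in>set cs. V \<mu> c = V \<mu> (Node L cs)"
proof -
  have "finite (V \<mu> ` set cs)" "V \<mu> ` set cs \<noteq> {}" using assms by auto
  then have "Max (V \<mu> ` set cs) \<in> V \<mu> ` set cs" "Min (V \<mu> ` set cs) \<in> V \<mu> ` set cs"
    by simp_all
  then show ?thesis by (cases L) (auto simp: image_iff)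
qed

lemma strictly_on_side_child_of_Q_node:
  assumes "\<not> is_P win L" and "c \<in> set cs"
    and "strictly_on_side win \<theta> (V \<mu> (Node L cs))"
  shows "strictly_on_side win \<theta> (V \<mu> c)"
proof (cases win)
  case True
  then have "L = MinNode" using assms(1) by (cases L) (auto simp: is_P_def)
  then have "\<theta> < Min (V \<mu> ` set cs)" using True assms(3) by simp
  moreover have "Min (V \<mu> ` set cs) \<le> V \<mu> c" using assms(2) by simp
  ultimately show ?thesis using True by simp
next
  case False
  then have "L = MaxNode" using assms(1) by (cases L) (auto simp: is_P_def)
  then have "Max (V \<mu> ` set cs) < \<theta>" using False assms(3) by simp
  moreover have "V \<mu> c \<le> Max (V \<mu> ` set cs)" using assms(2) by simp
  ultimately show ?thesis using False by simp
qed

lemma dv_child_le_P_node: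
  assumes "is_P win L" and "c \<in> set cs"
  shows "dv d \<theta> \<mu> win c \<le> dv d \<theta> \<mu> win (Node L cs)"
  using assms by (simp add: Max_ge)

lemma dv_pos_if_strictly_on_side:
  assumes "\<forall>L cs. Node L cs \<in> subtrees s \<longrightarrow> cs \<noteq> []"
    and "\<forall>l\<in>set (leaves s). \<mu> l \<in> X"
    and d_pos: "\<And>x. x \<in> X \<Longrightarrow> x \<noteq> \<theta> \<Longrightarrow> 0 < d x \<theta>"
    and "strictly_on_side win \<theta> (V \<mu> s)"
  shows "0 < dv d \<theta> \<mu> win s"
  using assms(1,2,4)
proof (induction s)
  case (Leaf a)
  then show ?case using d_pos[of "\<mu> a"] by (auto split: if_splits)
next
  case (Node L cs)
  have cs_ne: "cs \<noteq> []" using Node.prems(1) by auto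
  have IH: "0 < dv d \<theta> \<mu> win c"
    if c: "c \<in> set cs" and "strictly_on_side win \<theta> (V \<mu> c)" for c
  proof (rule Node.IH[OF c])
    show "\<forall>L cs. Node L cs \<in> subtrees c \<longrightarrow> cs \<noteq> []"
      using Node.prems(1) subtrees_child_subset[OF c] by blast
    show "\<forall>l\<in>set (leaves c). \<mu> l \<in> X"
      using Node.prems(2) leaves_child_subset[OF c] by blast
  qed fact
  show ?case
  proof (cases "is_P win L")
    case True
    obtain c where c: "c \<in> set cs" and "V \<mu> c = V \<mu> (Node L cs)"
      using V_Node_attained[OF cs_ne] by blast
    then have "0 < dv d \<theta> \<mu> win c" using IH Node.prems(3) by simp
    then show ?thesis using dv_child_le_P_node[OF True c, where d = d and \<theta> = \<theta> and \<mu> = \<mu>]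
      by linarith
  next
    case False
    have children_pos: "\<forall>c\<in>set cs. 0 < dv d \<theta> \<mu> win c"
      using IH strictly_on_side_child_of_Q_node[OF False _ Node.prems(3)] by blast
    then have "0 < (\<Sum>c\<leftarrow>cs. 1 / dv d \<theta> \<mu> win c)"
      by (intro sum_list_pos[OF cs_ne]) simp
    then show ?thesis using False children_pos by simp
  qed
qed

lemma dv_Leaf_pos_if_w_pos:
  assumes "\<forall>L cs. Node L cs \<in> subtrees s \<longrightarrow> is_P win L \<longrightarrow>
          cst (Node L cs) \<in> set cs \<and>
          dv d \<theta> \<mu> win (cst (Node L cs)) = dv d \<theta> \<mu> win (Node L cs)"
    and "0 < dv d \<theta> \<mu> win s"
    and "0 < w d \<theta> \<mu> win cst pv s l"
  shows "0 < dv d \<theta> \<mu> win (Leaf l)"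
  using assms
proof (induction s)
  case (Leaf a)
  then show ?case by (auto split: if_splits)
next
  case (Node L cs)
  have IH: "0 < dv d \<theta> \<mu> win (Leaf l)"
    if c: "c \<in> set cs" and "0 < dv d \<theta> \<mu> win c" and "0 < w d \<theta> \<mu> win cst pv c l" for c
  proof (rule Node.IH[OF c])
    show "\<forall>L cs. Node L cs \<in> subtrees c \<longrightarrow> is_P win L \<longrightarrow>
          cst (Node L cs) \<in> set cs \<and>
          dv d \<theta> \<mu> win (cst (Node L cs)) = dv d \<theta> \<mu> win (Node L cs)"
      using Node.prems(1) subtrees_child_subset[OF c] by blast
  qed fact+
  have dv_ne: "dv d \<theta> \<mu> win (Node L cs) \<noteq> 0" using Node.prems(2) by simp
  show ?case
  proof (cases "is_P win L")
    case True
    let ?c = "cst (Node L cs)"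
    have c: "?c \<in> set cs" "dv d \<theta> \<mu> win ?c = dv d \<theta> \<mu> win (Node L cs)"
      using Node.prems(1) True by auto
    have "0 < (\<Sum>c\<leftarrow>cs. if c = ?c \<and> l \<in> set (leaves c) then w d \<theta> \<mu> win cst pv c l else 0)"
      using Node.prems(3) dv_ne True by simp
    then have "0 < w d \<theta> \<mu> win cst pv ?c l"
      by (auto dest!: sum_list_pos_imp_ex_pos split: if_splits)
    then show ?thesis using IH c Node.prems(2) by simp
  next
    case False
    define S where "S = (\<Sum>c\<leftarrow>cs. 1 / dv d \<theta> \<mu> win c)"
    have children_pos: "\<forall>c\<in>set cs. 0 < dv d \<theta> \<mu> win c"
      using dv_ne False by (auto split: if_splits)
    then have "0 < S" using Node.prems(2) False by (simp add: S_def)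
    have "0 < (\<Sum>c\<leftarrow>cs. if l \<in> set (leaves c)
                 then (w d \<theta> \<mu> win cst pv c l / dv d \<theta> \<mu> win c) / S else 0)"
      unfolding S_def using Node.prems(3) dv_ne False by simp
    then obtain c where c: "c \<in> set cs" "0 < (w d \<theta> \<mu> win cst pv c l / dv d \<theta> \<mu> win c) / S"
      by (auto dest!: sum_list_pos_imp_ex_pos split: if_splits)
    moreover have "0 < dv d \<theta> \<mu> win c" using children_pos c(1) by blast
    ultimately have "0 < w d \<theta> \<mu> win cst pv c l"
      using \<open>0 < S\<close> by (auto simp: zero_less_divide_iff mult_less_0_iff)
    then show ?thesis using IH c(1) \<open>0 < dv d \<theta> \<mu> win c\<close> by simp
  qed
qed

lemma strictly_on_side_if_dv_Leaf_pos:
  assumes "d \<theta> \<theta> = 0" and "0 < dv d \<theta> \<mu> win (Leaf l)"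
  shows "strictly_on_side win \<theta> (\<mu> l)"
  using assms by (cases "\<mu> l = \<theta>") (auto split: if_splits)

theorem proposition1:
  fixes t :: "'a gtree" and \<mu> :: "'a \<Rightarrow> real" and X :: "real set"
    and d :: "real \<Rightarrow> real \<Rightarrow> real" and \<theta> :: real and win :: bool
    and cst :: "'a gtree \<Rightarrow> 'a gtree" and pv :: "'a gtree \<Rightarrow> 'a \<Rightarrow> real"
  assumes wf: "wf_gtree t"
    and d_div: "\<forall>x\<in>X. \<forall>y\<in>X. 0 \<le> d x y \<and> (d x y = 0 \<longleftrightarrow> x = y)"
    and theta_X: "\<theta> \<in> X"
    and mu_X: "\<forall>l\<in>set (leaves t). \<mu> l \<in> X"
    and V_ne: "V \<mu> t \<noteq> \<theta>"
    and win_def: "win \<longleftrightarrow> \<theta> \<le> V \<mu> t"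
    and cst_argmax: "\<forall>L cs. Node L cs \<in> subtrees t \<longrightarrow> is_P win L \<longrightarrow>
          cst (Node L cs) \<in> set cs \<and>
          dv d \<theta> \<mu> win (cst (Node L cs)) = dv d \<theta> \<mu> win (Node L cs)"
    and pv_prob: "\<forall>L cs. Node L cs \<in> subtrees t \<longrightarrow>
          (\<forall>l\<in>set (leaves (Node L cs)). 0 \<le> pv (Node L cs) l) \<and>
          (\<Sum>l\<leftarrow>leaves (Node L cs). pv (Node L cs) l) = 1"
  shows "\<forall>l\<in>set (leaves t). 0 < w d \<theta> \<mu> win cst pv t l \<longrightarrow>
           (if win then \<theta> < \<mu> l else \<mu> l < \<theta>)"
proof (intro ballI impI)
  fix l assume w_pos: "0 < w d \<theta> \<mu> win cst pv t l"
  have d_pos: "0 < d x \<theta>" if "x \<in> X" and "x \<noteq> \<theta>" for x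
    using d_div theta_X that by (metis order_le_less)
  have "strictly_on_side win \<theta> (V \<mu> t)" using V_ne win_def by auto
  then have dv_root_pos: "0 < dv d \<theta> \<mu> win t"
    using dv_pos_if_strictly_on_side[of t \<mu> X \<theta> d win, OF _ mu_X d_pos] wf by (auto simp: wf_gtree_def)
  have "d \<theta> \<theta> = 0" using d_div theta_X by blast
  moreover have "0 < dv d \<theta> \<mu> win (Leaf l)"
    by (rule dv_Leaf_pos_if_w_pos[OF cst_argmax dv_root_pos w_pos])
  ultimately show "if win then \<theta> < \<mu> l else \<mu> l < \<theta>"
    by (rule strictly_on_side_if_dv_Leaf_pos)
qed

end
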